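(* Let $u,v$ be positive integers with $uv\equiv 0\pmod{12}$ and $v\equiv 0\pmod 6$. Then $\Phi(u\times v,4,2)\le\left\lfloor\frac{u}{4}\left(\left\lfloor\frac{uv-1}{3}\left\lfloor\frac{uv-2}{2}\right\rfloor\right\rfloor-2\right)\right\rfloor$.
   Context: A 2-D $(u\times v,4,2)$-OOC is a family $\mathcal C$ of $u\times v$ $(0,1)$-matrices of Hamming weight $4$ such that for all $A=(a_{ij}),B=(b_{ij})\in\mathcal C$ and integers $r$ with $A\ne B$ or $r\not\equiv0\pmod v$, $\sum_{i,j}a_{ij}b_{i,j+r}\le 2$ (column indices mod $v$). $\Phi(u\times v,4,2)$ is the largest size of such a code. *)

theory Defs
  imports Complex_Main
begin

text \<open>A u x v (0,1)-matrix is represented by its support: a set of positions (i,j)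
  with i < u, j < v. Hamming weight = cardinality of the support.\<close>

definition matrices01 :: "nat \<Rightarrow> nat \<Rightarrow> (nat \<times> nat) set set" where
  "matrices01 u v = Pow ({0..<u} \<times> {0..<v})"

definition corr :: "nat \<Rightarrow> (nat \<times> nat) set \<Rightarrow> (nat \<times> nat) set \<Rightarrow> int \<Rightarrow> nat" where
  "corr v A B r = card {(i, j). (i, j) \<in> A \<and> (i, nat ((int j + r) mod int v)) \<in> B}"

definition is_OOC2D :: "nat \<Rightarrow> nat \<Rightarrow> nat \<Rightarrow> nat \<Rightarrow> (nat \<times> nat) set set \<Rightarrow> bool" where
  "is_OOC2D u v w lam C \<longleftrightarrow>
     C \<subseteq> matrices01 u v \<and> (\<forall>A\<in>C. card A = w) \<and>
     (\<forall>A\<in>C. \<forall>B\<in>C. \<forall>r::int. (A \<noteq> B \<or> \<not> (r mod int v = 0)) \<longrightarrow> corr v A B r \<le> lam)"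

definition Phi :: "nat \<Rightarrow> nat \<Rightarrow> nat \<Rightarrow> nat \<Rightarrow> nat" where
  "Phi u v w lam = Sup (card ` {C. is_OOC2D u v w lam C})"

end

theory Submission
  imports Defs
begin

(* Fix a row i and its point p = (i, 0).  Each flag (A, y) of the row, i.e. a block A with a point y
   in row i, yields the translate of A moving y to p.  By the correlation bound two such translates
   share at most two points, so every ordered pair (q, x) of further points lies in at most one of
   them; the pairs lying in none form the leave.  Counting ordered pairs gives
   6 * #flags + #leave = (uv - 1)(uv - 2), and the leave degree of q, being uv - 2 minus twice the
   number of flags through q, is even.  With v = 6w, the triple {0, 2w, 4w} is invariant under the
   shift by 2w, so (2w, 4w) is a leave pair; the flags through 3w are paired off by the half-period
   shift, so 3w has positive leave degree; and translating by -c shows that (i, c) and (i, v - c)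
   have positive degree simultaneously.  This yields five points of leave degree at least 2, hence
   #leave >= 10 and #flags <= 24k^2 - 6k - 2 for uv = 12k.  Summing over the u rows gives
   4 |C| <= u (24k^2 - 6k - 2). *)

definition cshift :: "nat \<Rightarrow> nat \<Rightarrow> nat \<times> nat \<Rightarrow> nat \<times> nat" where
  "cshift v s x = (fst x, (snd x + s) mod v)"

lemma cshift_simp [simp]: "cshift v s (a, b) = (a, (b + s) mod v)"
  by (simp add: cshift_def)

lemma cshift_cshift: "cshift v s (cshift v t x) = cshift v (t + s) x"
  by (cases x) (simp add: mod_add_left_eq add.assoc)

lemma cshift_cong: "s mod v = t mod v \<Longrightarrow> cshift v s x = cshift v t x"
  by (cases x) (simp, metis mod_add_right_eq)

lemma cshift_cancel:
  assumes "(s + t) mod v = 0" and "snd x < v"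
  shows "cshift v t (cshift v s x) = x"
proof -
  have "cshift v t (cshift v s x) = cshift v 0 x"
    unfolding cshift_cshift using assms(1) by (intro cshift_cong) simp
  with assms(2) show ?thesis by (cases x) simp
qed

lemma add_complement_mod:
  fixes s v :: nat
  assumes "0 < v" shows "(s + (v - s mod v)) mod v = 0"
proof -
  have "s = v * (s div v) + s mod v" by simp
  then have "s + (v - s mod v) = v * (s div v) + v"
    using mod_less_divisor[OF assms, of s] by linarith
  then show ?thesis by simp
qed

lemma cshift_inj_on:
  assumes "0 < v" shows "inj_on (cshift v s) {x. snd x < v}"
  by (rule inj_onI) (metis cshift_cancel add_complement_mod[OF assms] mem_Collect_eq)

lemma mod_add_eq_self_imp_dvd:
  fixes s t v :: nat
  assumes "(s + t) mod v = s mod v" shows "v dvd t"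
  using assms by (metis le_add1 mod_eq_dvd_iff_nat add_diff_cancel_left')

lemma even_card_involution:
  assumes "finite A"
    and "\<And>x. x \<in> A \<Longrightarrow> f x \<in> A" "\<And>x. x \<in> A \<Longrightarrow> f (f x) = x" "\<And>x. x \<in> A \<Longrightarrow> f x \<noteq> x"
  shows "even (card A)"
  using assms
proof (induction "card A" arbitrary: A rule: less_induct)
  case less
  show ?case
  proof (cases "A = {}")
    case False
    then obtain x where x: "x \<in> A" by blast
    let ?B = "A - {x, f x}"
    have sub: "{x, f x} \<subseteq> A" using less.prems(2) x by simp
    have card_B: "card A = card ?B + 2"
      using card_Diff_subset[OF _ sub] card_mono[OF less.prems(1) sub] less.prems(4)[OF x]
      by (simp add: less.prems(1))
    have "f y \<in> ?B" if "y \<in> ?B" for y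
      using that less.prems(2) less.prems(3)[of y] less.prems(3)[OF x] by auto
    then have "even (card ?B)"
      using less.prems card_B by (intro less.hyps) auto
    with card_B show ?thesis by simp
  qed simp
qed

lemma length_le_card_if_distinct:
  assumes "distinct xs" "set xs \<subseteq> A" "finite A"
  shows "length xs \<le> card A"
  using card_mono[OF assms(3,2)] distinct_card[OF assms(1)] by simp

lemma corr_eq_card: "corr v A B (int s) = card {x \<in> A. cshift v s x \<in> B}"
proof -
  have "nat ((int j + int s) mod int v) = (j + s) mod v" for j
    by (metis nat_int of_nat_add zmod_int)
  then show ?thesis
    unfolding corr_def by (intro arg_cong[where f = card]) auto
qed

locale ooc =
  fixes u v :: nat and C :: "(nat \<times> nat) set set"
  assumes v_pos: "0 < v" and code: "is_OOC2D u v 4 2 C"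
begin

definition G :: "(nat \<times> nat) set" where "G = {0..<u} \<times> {0..<v}"

lemma finite_G: "finite G" and card_G: "card G = u * v"
  by (simp_all add: G_def)

lemma snd_lt_if_in_G: "x \<in> G \<Longrightarrow> snd x < v"
  by (auto simp: G_def)

lemma cshift_in_G: "x \<in> G \<Longrightarrow> cshift v s x \<in> G"
  using v_pos by (cases x) (auto simp: G_def)

lemma inj_on_cshift_G: "inj_on (cshift v s) G"
  by (rule inj_on_subset[OF cshift_inj_on[OF v_pos]]) (auto simp: G_def)

lemma block_subset_G: "A \<in> C \<Longrightarrow> A \<subseteq> G"
  using code by (auto simp: is_OOC2D_def matrices01_def G_def)

lemma snd_lt_if_in_block: "A \<in> C \<Longrightarrow> y \<in> A \<Longrightarrow> snd y < v"
  using block_subset_G snd_lt_if_in_G by blast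

lemma card_block: "A \<in> C \<Longrightarrow> card A = 4"
  using code by (auto simp: is_OOC2D_def)

lemma finite_code: "finite C"
  using block_subset_G finite_G by (meson Pow_iff finite_Pow_iff rev_finite_subset subsetI)

lemma card_translate: "A \<in> C \<Longrightarrow> card (cshift v s ` A) = 4"
  using card_block block_subset_G inj_on_subset[OF inj_on_cshift_G] by (simp add: card_image)

lemma corr_le_2:
  assumes "A \<in> C" "B \<in> C" "s < v" "A \<noteq> B \<or> s \<noteq> 0"
  shows "card {x \<in> A. cshift v s x \<in> B} \<le> 2"
  using code assms unfolding is_OOC2D_def corr_eq_card[symmetric] by auto

lemma card_translates_Int_le_2:
  assumes A: "A \<in> C" and B: "B \<in> C" and ne: "A \<noteq> B \<or> a mod v \<noteq> b mod v"
  shows "card (cshift v a ` A \<inter> cshift v b ` B) \<le> 2"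
proof -
  define t where "t = (a + (v - b mod v)) mod v"
  have unshift: "cshift v (v - b mod v) (cshift v b z) = z" if "z \<in> B" for z
    by (intro cshift_cancel add_complement_mod v_pos snd_lt_if_in_G)
      (use block_subset_G[OF B] that in blast)
  have "(b + t) mod v = (a + (b + (v - b mod v))) mod v"
    by (simp add: t_def mod_add_right_eq add_ac)
  also have "\<dots> = a mod v"
    by (metis add_complement_mod[OF v_pos] add.right_neutral mod_add_right_eq)
  finally have "(b + t) mod v = a mod v" .
  then have fwd: "cshift v b (cshift v t x) = cshift v a x" for x
    unfolding cshift_cshift by (metis cshift_cong add.commute)
  have "cshift v a ` A \<inter> cshift v b ` B = cshift v a ` {x \<in> A. cshift v t x \<in> B}"
  proof (intro equalityI subsetI)
    fix y assume "y \<in> cshift v a ` A \<inter> cshift v b ` B"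
    then obtain x z where x: "x \<in> A" "y = cshift v a x" and z: "z \<in> B" "y = cshift v b z"
      by blast
    have "z = cshift v (v - b mod v) (cshift v a x)"
      using unshift[OF z(1)] x(2) z(2) by simp
    also have "\<dots> = cshift v t x"
      unfolding cshift_cshift t_def by (rule cshift_cong) simp
    finally show "y \<in> cshift v a ` {x \<in> A. cshift v t x \<in> B}"
      using x z by blast
  next
    fix y assume "y \<in> cshift v a ` {x \<in> A. cshift v t x \<in> B}"
    then obtain x where "x \<in> A" "cshift v t x \<in> B" "y = cshift v a x" by blast
    then show "y \<in> cshift v a ` A \<inter> cshift v b ` B"
      using fwd[of x] by (metis IntI image_eqI)
  qed
  also have "card \<dots> = card {x \<in> A. cshift v t x \<in> B}"
    using block_subset_G[OF A] by (intro card_image inj_on_subset[OF inj_on_cshift_G]) auto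
  also have "\<dots> \<le> 2"
  proof (rule corr_le_2[OF A B])
    show "t < v" using v_pos by (simp add: t_def)
    show "A \<noteq> B \<or> t \<noteq> 0"
      using ne \<open>(b + t) mod v = a mod v\<close> by (cases "t = 0") auto
  qed
  finally show ?thesis .
qed

definition flags :: "nat \<Rightarrow> ((nat \<times> nat) set \<times> (nat \<times> nat)) set" where
  "flags i = {(A, y). A \<in> C \<and> y \<in> A \<and> fst y = i}"

lemma fst_flag_in_code: "fl \<in> flags j \<Longrightarrow> fst fl \<in> C"
  by (auto simp: flags_def)

lemma snd_lt_if_flag: "(A, y) \<in> flags j \<Longrightarrow> snd y < v"
  unfolding flags_def using snd_lt_if_in_block by blast

lemma finite_flags: "finite (flags i)"
proof -
  have "flags i \<subseteq> C \<times> G" using block_subset_G by (auto simp: flags_def)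
  then show ?thesis using finite_code finite_G finite_subset by blast
qed

lemma sum_card_flags: "(\<Sum>i<u. card (flags i)) = 4 * card C"
proof -
  have "(\<Sum>i<u. card (flags i)) = card (\<Union>i<u. flags i)"
    by (rule card_UN_disjoint[symmetric]) (use finite_flags in \<open>auto simp: flags_def\<close>)
  also have "(\<Union>i<u. flags i) = Sigma C (\<lambda>A. A)"
    using block_subset_G by (fastforce simp: flags_def G_def)
  also have "card \<dots> = (\<Sum>A\<in>C. card A)"
    using finite_code card_block by (intro card_SigmaI) (auto intro: card_ge_0_finite)
  finally show ?thesis using card_block by simp
qed

end

locale ooc_row = ooc +
  fixes i :: nat
  assumes row: "i < u"
begin

definition p :: "nat \<times> nat" where "p = (i, 0)"

definition anchored :: "(nat \<times> nat) set \<times> (nat \<times> nat) \<Rightarrow> (nat \<times> nat) set" where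
  "anchored fl = cshift v (v - snd (snd fl)) ` fst fl"

definition covered :: "(nat \<times> nat) set \<Rightarrow> bool" where
  "covered T \<longleftrightarrow> (\<exists>A\<in>C. \<exists>s. T \<subseteq> cshift v s ` A)"

definition leave :: "nat \<times> nat \<Rightarrow> (nat \<times> nat) set" where
  "leave q = {x \<in> G. x \<noteq> p \<and> x \<noteq> q \<and> \<not> covered {p, q, x}}"

definition leave_support :: "(nat \<times> nat) set" where
  "leave_support = {q \<in> G - {p}. leave q \<noteq> {}}"

definition through :: "nat \<times> nat \<Rightarrow> ((nat \<times> nat) set \<times> (nat \<times> nat)) set" where
  "through q = {fl \<in> flags i. q \<in> anchored fl}"

lemma p_in_G: "p \<in> G"
  using row v_pos by (simp add: p_def G_def)

lemma p_in_anchored: "fl \<in> flags i \<Longrightarrow> p \<in> anchored fl"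
proof -
  assume "fl \<in> flags i"
  then obtain A y where fl: "fl = (A, y)" "A \<in> C" "y \<in> A" "fst y = i"
    by (auto simp: flags_def)
  have "snd y < v" using snd_lt_if_in_block fl(2,3) by blast
  with fl have "cshift v (v - snd y) y = p" by (cases y) (simp add: p_def)
  then have "p \<in> cshift v (v - snd y) ` A" using fl(3) by (metis imageI)
  with fl(1) show ?thesis by (simp add: anchored_def)
qed

lemma anchored_subset_G:
  assumes "fl \<in> flags i" shows "anchored fl \<subseteq> G"
  using block_subset_G[OF fst_flag_in_code[OF assms]] cshift_in_G
  unfolding anchored_def by blast

lemma card_anchored: "fl \<in> flags i \<Longrightarrow> card (anchored fl) = 4"
  using fst_flag_in_code card_translate by (simp add: anchored_def)

lemma covered_if_subset_anchored: "fl \<in> flags i \<Longrightarrow> T \<subseteq> anchored fl \<Longrightarrow> covered T"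
  using fst_flag_in_code unfolding covered_def anchored_def by blast

lemma anchored_if_covered:
  assumes "covered T" "p \<in> T"
  shows "\<exists>fl\<in>flags i. T \<subseteq> anchored fl"
proof -
  obtain A s where A: "A \<in> C" "T \<subseteq> cshift v s ` A"
    using assms(1) by (auto simp: covered_def)
  have "p \<in> cshift v s ` A" using A(2) assms(2) by (rule subsetD)
  then obtain y where y: "y \<in> A" "cshift v s y = p" by (metis imageE)
  have "snd y < v" using snd_lt_if_in_block A(1) y(1) by blast
  have "(snd y + s) mod v = 0" using y(2) by (cases y) (simp add: p_def)
  moreover have "s + v = (snd y + s) + (v - snd y)"
    using \<open>snd y < v\<close> by simp
  ultimately have "s mod v = (v - snd y) mod v"
    by (metis mod_add_self2 mod_add_left_eq add_0)
  then have "cshift v s = cshift v (v - snd y)"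
    by (intro ext cshift_cong)
  then have "T \<subseteq> anchored (A, y)"
    using A(2) by (simp add: anchored_def)
  moreover have "(A, y) \<in> flags i"
    using A(1) y by (cases y) (auto simp: flags_def p_def)
  ultimately show ?thesis by blast
qed

lemma anchored_unique:
  assumes fl: "fl \<in> flags i" and fl': "fl' \<in> flags i"
    and T: "T \<subseteq> anchored fl" "T \<subseteq> anchored fl'" "card T = 3"
  shows "fl = fl'"
proof (rule ccontr)
  assume "fl \<noteq> fl'"
  obtain A y A' y' where eq: "fl = (A, y)" "fl' = (A', y')" by (metis prod.exhaust)
  have A: "A \<in> C" "A' \<in> C" and y: "fst y = i" "fst y' = i"
    using fl fl' eq by (auto simp: flags_def)
  have "snd y < v" "snd y' < v" using fl fl' eq snd_lt_if_flag by auto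
  then have "A \<noteq> A' \<or> (v - snd y) mod v \<noteq> (v - snd y') mod v"
    using \<open>fl \<noteq> fl'\<close> eq y by (cases "snd y = 0"; cases "snd y' = 0") (auto simp: prod_eq_iff)
  then have "card (anchored fl \<inter> anchored fl') \<le> 2"
    using card_translates_Int_le_2[OF A] eq by (simp add: anchored_def)
  moreover have "card T \<le> card (anchored fl \<inter> anchored fl')"
    using T anchored_subset_G[OF fl] finite_G by (intro card_mono) (auto intro: finite_subset)
  ultimately show False using T(3) by simp
qed

lemma leave_subset: "leave q \<subseteq> G - {p}"
  by (auto simp: leave_def)

lemma leave_sym: "q \<in> G - {p} \<Longrightarrow> x \<in> leave q \<Longrightarrow> q \<in> leave x"
  by (auto simp: leave_def insert_commute)

lemma leave_support_if_in_leave: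
  assumes "q \<in> G - {p}" "x \<in> leave q"
  shows "q \<in> leave_support" "x \<in> leave_support"
proof -
  show "q \<in> leave_support" using assms by (auto simp: leave_support_def)
  have "x \<in> G - {p}" using assms(2) leave_subset by blast
  with leave_sym[OF assms] show "x \<in> leave_support" by (auto simp: leave_support_def)
qed

lemma pair_subset_anchored: "fl \<in> through q \<Longrightarrow> {p, q} \<subseteq> anchored fl"
  using p_in_anchored by (simp add: through_def)

lemma covered_iff_through: "covered {p, q, x} \<longleftrightarrow> (\<exists>fl\<in>through q. x \<in> anchored fl)"
proof
  assume "covered {p, q, x}"
  then obtain fl where "fl \<in> flags i" "{p, q, x} \<subseteq> anchored fl"
    using anchored_if_covered by blast
  then have "fl \<in> through q" "x \<in> anchored fl" by (simp_all add: through_def)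
  then show "\<exists>fl\<in>through q. x \<in> anchored fl" by blast
next
  assume "\<exists>fl\<in>through q. x \<in> anchored fl"
  then obtain fl where fl: "fl \<in> through q" "x \<in> anchored fl" by blast
  then have "{p, q, x} \<subseteq> anchored fl" using pair_subset_anchored by simp
  moreover have "fl \<in> flags i" using fl(1) by (simp add: through_def)
  ultimately show "covered {p, q, x}" by (intro covered_if_subset_anchored)
qed

lemma card_anchored_minus_pair:
  assumes "q \<in> G - {p}" "fl \<in> through q"
  shows "card (anchored fl - {p, q}) = 2"
proof -
  have fl: "fl \<in> flags i" using assms(2) by (simp add: through_def)
  have "finite (anchored fl)" using anchored_subset_G[OF fl] finite_G by (rule finite_subset)
  then have "card (anchored fl - {p, q}) = card (anchored fl) - card {p, q}"
    using pair_subset_anchored[OF assms(2)] by (intro card_Diff_subset) (auto intro: finite_subset)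
  moreover have "card {p, q} = 2" using assms(1) by auto
  ultimately show ?thesis using card_anchored[OF fl] by simp
qed

lemma disjoint_anchored_minus_pair:
  assumes "q \<in> G - {p}" "fl \<in> through q" "fl' \<in> through q" "fl \<noteq> fl'"
  shows "(anchored fl - {p, q}) \<inter> (anchored fl' - {p, q}) = {}"
proof (rule equals0I)
  fix x assume x: "x \<in> (anchored fl - {p, q}) \<inter> (anchored fl' - {p, q})"
  then have "{p, q, x} \<subseteq> anchored fl" "{p, q, x} \<subseteq> anchored fl'"
    using pair_subset_anchored assms(2,3) by auto
  moreover have "card {p, q, x} = 3" using assms(1) x by auto
  moreover have "fl \<in> flags i" "fl' \<in> flags i" using assms(2,3) by (simp_all add: through_def)
  ultimately show False
    using anchored_unique assms(4) by blast
qed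

lemma leave_Un_through:
  "G - {p, q} = leave q \<union> (\<Union>fl\<in>through q. anchored fl - {p, q})" (is "_ = _ \<union> ?R")
proof (intro equalityI subsetI)
  fix x assume x: "x \<in> G - {p, q}"
  show "x \<in> leave q \<union> ?R"
  proof (cases "covered {p, q, x}")
    case True
    then obtain fl where "fl \<in> through q" "x \<in> anchored fl"
      using covered_iff_through by blast
    with x show ?thesis by blast
  next
    case False
    with x show ?thesis by (simp add: leave_def)
  qed
next
  fix x assume "x \<in> leave q \<union> ?R"
  then consider "x \<in> leave q" | fl where "fl \<in> through q" "x \<in> anchored fl - {p, q}"
    by blast
  then show "x \<in> G - {p, q}"
  proof cases
    case (2 fl)
    then have "fl \<in> flags i" by (simp add: through_def)
    with 2 show ?thesis using anchored_subset_G by blast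
  qed (simp add: leave_def)
qed

lemma leave_Int_through: "leave q \<inter> (\<Union>fl\<in>through q. anchored fl - {p, q}) = {}"
proof (rule equals0I)
  fix x assume "x \<in> leave q \<inter> (\<Union>fl\<in>through q. anchored fl - {p, q})"
  then have "\<not> covered {p, q, x}" "\<exists>fl\<in>through q. x \<in> anchored fl"
    by (auto simp: leave_def)
  then show False using covered_iff_through by blast
qed

lemma card_leave_through:
  assumes q: "q \<in> G - {p}"
  shows "card (leave q) + 2 * card (through q) = u * v - 2"
proof -
  let ?R = "\<Union>fl\<in>through q. anchored fl - {p, q}"
  have "card ?R = 2 * card (through q)"
  proof -
    have "finite (through q)" using finite_flags by (simp add: through_def)
    moreover have "\<forall>fl\<in>through q. finite (anchored fl - {p, q})"
      using card_anchored_minus_pair[OF q] by (metis card.infinite zero_neq_numeral)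
    ultimately have "card ?R = (\<Sum>fl\<in>through q. card (anchored fl - {p, q}))"
      using disjoint_anchored_minus_pair[OF q] by (intro card_UN_disjoint) blast+
    then show ?thesis using card_anchored_minus_pair[OF q] by simp
  qed
  moreover have "card (G - {p, q}) = card (leave q) + card ?R"
  proof -
    have "finite (leave q \<union> ?R)" unfolding leave_Un_through[symmetric] using finite_G by simp
    then show ?thesis unfolding leave_Un_through[of q] using leave_Int_through[of q]
      by (intro card_Un_disjoint) simp_all
  qed
  moreover have "card {p, q} = 2" using q by auto
  then have "card (G - {p, q}) = u * v - 2"
    using q p_in_G finite_G card_G by (simp add: card_Diff_subset)
  ultimately show ?thesis by simp
qed

lemma sum_card_through: "(\<Sum>q\<in>G - {p}. card (through q)) = 3 * card (flags i)"
  unfolding through_def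
proof (rule sum_multicount)
  show "\<forall>fl\<in>flags i. card {q \<in> G - {p}. q \<in> anchored fl} = 3"
  proof
    fix fl assume fl: "fl \<in> flags i"
    then have "{q \<in> G - {p}. q \<in> anchored fl} = anchored fl - {p}"
      using anchored_subset_G by blast
    then show "card {q \<in> G - {p}. q \<in> anchored fl} = 3"
      using card_anchored[OF fl] p_in_anchored[OF fl] by simp
  qed
qed (simp_all add: finite_G finite_flags)

lemma sum_card_leave:
  "(\<Sum>q\<in>G - {p}. card (leave q)) + 6 * card (flags i) = (u * v - 1) * (u * v - 2)"
proof -
  have "(\<Sum>q\<in>G - {p}. card (leave q)) + 6 * card (flags i)
      = (\<Sum>q\<in>G - {p}. card (leave q)) + (\<Sum>q\<in>G - {p}. 2 * card (through q))"
    by (simp only: sum_card_through flip: sum_distrib_left)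
  also have "\<dots> = (\<Sum>q\<in>G - {p}. card (leave q) + 2 * card (through q))"
    by (rule sum.distrib[symmetric])
  also have "\<dots> = (\<Sum>q\<in>G - {p}. u * v - 2)"
    using card_leave_through by (rule sum.cong[OF refl])
  also have "\<dots> = (u * v - 1) * (u * v - 2)"
    using p_in_G finite_G card_G by simp
  finally show ?thesis .
qed

lemma covered_cshift:
  assumes "covered T" shows "covered (cshift v c ` T)"
proof -
  obtain A s where A: "A \<in> C" "T \<subseteq> cshift v s ` A"
    using assms by (auto simp: covered_def)
  have "cshift v c ` T \<subseteq> cshift v c ` cshift v s ` A"
    using A(2) by (rule image_mono)
  also have "\<dots> = cshift v (s + c) ` A"
    by (simp add: image_image cshift_cshift)
  finally show ?thesis using A(1) unfolding covered_def by blast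
qed

lemma leave_cshift:
  assumes c: "c < v" and x: "x \<in> leave (i, c)"
  shows "cshift v (v - c) x \<in> leave (i, v - c)"
proof -
  let ?x = "cshift v (v - c) x"
  have x': "x \<in> G" "x \<noteq> p" "x \<noteq> (i, c)" "\<not> covered {p, (i, c), x}"
    using x by (auto simp: leave_def)
  have unshift: "cshift v c ?x = x"
    using c snd_lt_if_in_G[OF x'(1)] by (intro cshift_cancel) simp_all
  have "cshift v c ` {p, (i, v - c), ?x} = {p, (i, c), x}"
    using c unshift by (simp add: p_def insert_commute)
  then have "\<not> covered {p, (i, v - c), ?x}"
    using x'(4) covered_cshift by metis
  moreover have "?x \<noteq> p" "?x \<noteq> (i, v - c)"
    using unshift c x'(2,3) by (auto simp: p_def)
  ultimately show ?thesis
    using cshift_in_G[OF x'(1)] by (simp add: leave_def)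
qed

lemma mem_anchored_iff:
  assumes fl: "(A, y) \<in> flags i" and c: "c < v"
  shows "(i, c) \<in> anchored (A, y) \<longleftrightarrow> cshift v c y \<in> A"
proof -
  obtain j where y: "y = (i, j)" and j: "j < v"
    using fl snd_lt_if_flag by (cases y) (auto simp: flags_def)
  have shift_iff: "cshift v (v - j) z = (i, c) \<longleftrightarrow> z = cshift v c y" if "z \<in> A" for z
  proof
    assume "cshift v (v - j) z = (i, c)"
    moreover have "cshift v j (cshift v (v - j) z) = z"
      using j that fst_flag_in_code[OF fl] snd_lt_if_in_block by (intro cshift_cancel) simp_all
    ultimately show "z = cshift v c y" using y by (simp add: add.commute)
  next
    assume z: "z = cshift v c y"
    have "cshift v (v - j) (cshift v c y) = (i, (j + (c + (v - j))) mod v)"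
      unfolding cshift_cshift by (simp only: y cshift_simp)
    moreover have "j + (c + (v - j)) = c + v" using j by simp
    ultimately show "cshift v (v - j) z = (i, c)" using c z by simp
  qed
  have "(i, c) \<in> anchored (A, y) \<longleftrightarrow> (\<exists>z\<in>A. cshift v (v - j) z = (i, c))"
    by (force simp: anchored_def y simp del: cshift_simp)
  also have "\<dots> \<longleftrightarrow> (\<exists>z\<in>A. z = cshift v c y)"
    using shift_iff by (rule bex_cong[OF refl])
  finally show ?thesis by simp
qed

end

locale ooc_row_sixths = ooc_row +
  fixes w :: nat
  assumes v_eq: "v = 6 * w" and four_dvd: "4 dvd u * v"
begin

lemma w_pos: "0 < w"
  using v_pos v_eq by simp

lemma cshift_sixths: "cshift v (m * w) (j, k * w) = (j, ((k + m) mod 6) * w)"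
  using v_eq by (simp add: add_mult_distrib[symmetric] mod_mult_mult2)

lemma sixth_point_in_G: "0 < k \<Longrightarrow> k < 6 \<Longrightarrow> (i, k * w) \<in> G - {p}"
  unfolding G_def p_def using row v_eq w_pos by auto

lemma leave_cshift_sixths:
  assumes "0 < k" "k < 6" "x \<in> leave (i, k * w)"
  shows "cshift v ((6 - k) * w) x \<in> leave (i, (6 - k) * w)"
proof -
  have "v - k * w = (6 - k) * w" using v_eq by (simp add: diff_mult_distrib)
  then show ?thesis using leave_cshift[of "k * w" x] assms v_eq w_pos by simp
qed

lemma even_card_leave:
  assumes "q \<in> G - {p}" shows "even (card (leave q))"
proof -
  have "even (u * v - 2)" using four_dvd by presburger
  with card_leave_through[OF assms] show ?thesis by presburger
qed

lemma even_card_through_half: "even (card (through (i, 3 * w)))"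
proof (rule even_card_involution)
  define f :: "(nat \<times> nat) set \<times> (nat \<times> nat) \<Rightarrow> _" where
    "f fl = (fst fl, cshift v (3 * w) (snd fl))" for fl
  have half: "(3 * w + 3 * w) mod v = 0" and lt: "3 * w < v" using v_eq w_pos by simp_all
  have through_iff: "(A, y) \<in> through (i, 3 * w) \<longleftrightarrow>
      (A, y) \<in> flags i \<and> cshift v (3 * w) y \<in> A" for A y
  proof (cases "(A, y) \<in> flags i")
    case True
    then show ?thesis using mem_anchored_iff[OF True lt] by (simp add: through_def del: cshift_simp)
  qed (simp add: through_def)
  show "finite (through (i, 3 * w))"
    using finite_flags by (simp add: through_def)
  show "f fl \<in> through (i, 3 * w)" if "fl \<in> through (i, 3 * w)" for fl
    using that snd_lt_if_flag cshift_cancel[OF half]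
    by (cases fl) (auto simp: f_def through_iff flags_def)
  show "f (f fl) = fl" if "fl \<in> through (i, 3 * w)" for fl
    using that snd_lt_if_flag cshift_cancel[OF half]
    by (cases fl) (auto simp: f_def through_iff)
  show "f fl \<noteq> fl" if "fl \<in> through (i, 3 * w)" for fl
  proof
    assume "f fl = fl"
    then have "(snd (snd fl) + 3 * w) mod v = snd (snd fl) mod v"
      using that snd_lt_if_flag by (cases fl; cases "snd fl") (auto simp: f_def through_iff)
    then have "v dvd 3 * w" by (rule mod_add_eq_self_imp_dvd)
    then show False using lt w_pos by (auto dest: dvd_imp_le)
  qed
qed

lemma leave_half_nonempty: "leave (i, 3 * w) \<noteq> {}"
proof
  assume empty: "leave (i, 3 * w) = {}"
  obtain t where "card (through (i, 3 * w)) = 2 * t"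
    using even_card_through_half by blast
  with empty have "4 * t = u * v - 2"
    using card_leave_through[OF sixth_point_in_G, of 3] by simp
  moreover have "6 \<le> u * v" using row v_eq w_pos by (simp add: mult_le_mono)
  ultimately show False using four_dvd by presburger
qed

lemma two_thirds_in_leave_third: "(i, 4 * w) \<in> leave (i, 2 * w)"
proof -
  let ?T = "{p, (i, 2 * w), (i, 4 * w)}"
  have "\<not> covered ?T"
  proof
    assume "covered ?T"
    then obtain A s where A: "A \<in> C" "?T \<subseteq> cshift v s ` A"
      by (auto simp: covered_def)
    have "cshift v (2 * w) ` ?T = ?T"
      using cshift_sixths[of 2 i 0] cshift_sixths[of 2 i 2] cshift_sixths[of 2 i 4]
      by (auto simp: p_def)
    then have "?T \<subseteq> cshift v (2 * w) ` cshift v s ` A"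
      using A(2) by (metis image_mono)
    also have "\<dots> = cshift v (s + 2 * w) ` A"
      by (simp add: image_image cshift_cshift)
    finally have "?T \<subseteq> cshift v s ` A \<inter> cshift v (s + 2 * w) ` A"
      using A(2) by blast
    moreover have "finite (cshift v s ` A)"
      using card_translate[OF A(1)] by (metis card.infinite zero_neq_numeral)
    ultimately have "card ?T \<le> card (cshift v s ` A \<inter> cshift v (s + 2 * w) ` A)"
      by (intro card_mono) simp_all
    moreover have "s mod v \<noteq> (s + 2 * w) mod v"
    proof
      assume "s mod v = (s + 2 * w) mod v"
      then have "v dvd 2 * w" by (intro mod_add_eq_self_imp_dvd[of s]) simp
      then show False using v_eq w_pos by (auto dest: dvd_imp_le)
    qed
    then have "card (cshift v s ` A \<inter> cshift v (s + 2 * w) ` A) \<le> 2"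
      using card_translates_Int_le_2[OF A(1) A(1)] by blast
    moreover have "card ?T = 3" using w_pos by (simp add: p_def)
    ultimately show False by simp
  qed
  then show ?thesis
    using sixth_point_in_G[of 4] w_pos by (simp add: leave_def)
qed

lemma leave_support_mirror:
  assumes "(i, k * w) \<in> leave_support" "0 < k" "k < 6"
  shows "(i, (6 - k) * w) \<in> leave_support"
proof -
  obtain x where "x \<in> leave (i, k * w)" using assms(1) by (auto simp: leave_support_def)
  then have "cshift v ((6 - k) * w) x \<in> leave (i, (6 - k) * w)"
    using leave_cshift_sixths assms(2,3) by blast
  moreover have "(i, (6 - k) * w) \<in> G - {p}" using assms(2,3) by (intro sixth_point_in_G) simp_all
  ultimately show ?thesis by (auto simp: leave_support_def)
qed

(* The points 2w, 3w, 4w and the leave neighbours a, a + 3w of 3w lie in the support.  Unless these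
   are five distinct points, one of a, a + 3w is w or 5w, and then both w and 5w do. *)
lemma card_leave_support_ge_5: "5 \<le> card leave_support"
proof -
  let ?h = "\<lambda>k. (i, k * w)"
  have five: "5 \<le> card leave_support"
    if "distinct [a, b, c, d, e]" "set [a, b, c, d, e] \<subseteq> leave_support" for a b c d e
    using length_le_card_if_distinct[OF that] finite_G by (simp add: leave_support_def)
  have h2: "?h 2 \<in> leave_support" and h4: "?h 4 \<in> leave_support"
    using leave_support_if_in_leave[OF sixth_point_in_G two_thirds_in_leave_third] by simp_all
  obtain a where a: "a \<in> leave (?h 3)" using leave_half_nonempty by blast
  define b where "b = cshift v (3 * w) a"
  have b: "b \<in> leave (?h 3)" using leave_cshift_sixths[of 3 a] a by (simp add: b_def)
  have a_G: "a \<in> G" using a leave_subset by blast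
  have ba: "cshift v (3 * w) b = a"
    unfolding b_def using v_eq snd_lt_if_in_G[OF a_G] by (intro cshift_cancel) simp_all
  have "a \<noteq> b"
  proof
    assume "a = b"
    then have "(snd a + 3 * w) mod v = snd a mod v"
      using snd_lt_if_in_G[OF a_G] by (cases a) (simp add: b_def)
    then have "v dvd 3 * w" by (rule mod_add_eq_self_imp_dvd)
    then show False using v_eq w_pos by (auto dest: dvd_imp_le)
  qed
  have h3: "?h 3 \<in> leave_support" and ab: "a \<in> leave_support" "b \<in> leave_support"
    using leave_support_if_in_leave[OF sixth_point_in_G a] leave_support_if_in_leave[OF sixth_point_in_G b]
    by simp_all
  show ?thesis
  proof (cases "?h 1 \<in> leave_support \<or> ?h 5 \<in> leave_support")
    case True
    then have "?h 1 \<in> leave_support" "?h 5 \<in> leave_support"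
      using leave_support_mirror[of 1] leave_support_mirror[of 5] by force+
    then show ?thesis by (intro five[of "?h 1" "?h 2" "?h 3" "?h 4" "?h 5"]) (use h2 h3 h4 w_pos in simp_all)
  next
    case False
    then have "a \<notin> {?h 1, ?h 5}" "b \<notin> {?h 1, ?h 5}" using ab by auto
    moreover have "a \<notin> {?h 2, ?h 4}" "b \<notin> {?h 2, ?h 4}"
      using calculation ba cshift_sixths[of 3 i 2] cshift_sixths[of 3 i 4] by (auto simp: b_def)
    moreover have "a \<noteq> ?h 3" "b \<noteq> ?h 3" using a b by (simp_all add: leave_def)
    ultimately have "distinct [?h 2, ?h 3, ?h 4, a, b]" using \<open>a \<noteq> b\<close> w_pos by auto
    then show ?thesis by (rule five) (use h2 h3 h4 ab in simp)
  qed
qed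

lemma sum_card_leave_ge_10: "10 \<le> (\<Sum>q\<in>G - {p}. card (leave q))"
proof -
  have "2 \<le> card (leave q)" if "q \<in> leave_support" for q
  proof -
    have "finite (leave q)" using leave_subset finite_G by (meson finite_Diff finite_subset)
    then have "card (leave q) \<noteq> 0" using that by (simp add: leave_support_def)
    moreover have "even (card (leave q))" using that even_card_leave by (simp add: leave_support_def)
    ultimately show ?thesis by presburger
  qed
  then have "2 * card leave_support \<le> (\<Sum>q\<in>leave_support. card (leave q))"
    using sum_mono[of leave_support "\<lambda>_. 2" "\<lambda>q. card (leave q)"] by simp
  also have "\<dots> \<le> (\<Sum>q\<in>G - {p}. card (leave q))"
    using finite_G by (intro sum_mono2) (auto simp: leave_support_def)
  finally show ?thesis using card_leave_support_ge_5 by linarith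
qed

lemma card_flags_le: "6 * card (flags i) + 10 \<le> (u * v - 1) * (u * v - 2)"
  using sum_card_leave sum_card_leave_ge_10 by linarith

end

lemma card_code_le:
  fixes u v k :: nat
  assumes code: "is_OOC2D u v 4 2 C" and v: "0 < v" "6 dvd v" and k: "u * v = 12 * k"
  shows "4 * int (card C) \<le> int u * (24 * int k ^ 2 - 6 * int k - 2)"
proof -
  interpret ooc u v C using code v by unfold_locales
  obtain w where w: "v = 6 * w" using v(2) by blast
  have row: "int (card (flags i)) \<le> 24 * int k ^ 2 - 6 * int k - 2" if i: "i < u" for i
  proof -
    interpret ooc_row_sixths u v C i w
      using i w k by unfold_locales simp_all
    have "0 < u * v" using i v by simp
    then have "1 \<le> k" using k by simp
    then have "int ((u * v - 1) * (u * v - 2)) = (12 * int k - 1) * (12 * int k - 2)"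
      using k by (simp add: of_nat_diff)
    then have "6 * int (card (flags i)) + 10 \<le> (12 * int k - 1) * (12 * int k - 2)"
      using card_flags_le by linarith
    then show ?thesis by (simp add: algebra_simps power2_eq_square)
  qed
  have "4 * int (card C) = (\<Sum>i<u. int (card (flags i)))"
    using sum_card_flags by (metis of_nat_mult of_nat_numeral of_nat_sum)
  also have "\<dots> \<le> (\<Sum>i<u. 24 * int k ^ 2 - 6 * int k - 2)"
    using row by (intro sum_mono) simp
  finally show ?thesis by simp
qed

lemma Phi_le:
  assumes "\<And>C. is_OOC2D u v w lam C \<Longrightarrow> card C \<le> b"
  shows "Phi u v w lam \<le> b"
  unfolding Phi_def
proof (rule cSup_least)
  have "is_OOC2D u v w lam {}" by (simp add: is_OOC2D_def)
  then show "card ` {C. is_OOC2D u v w lam C} \<noteq> {}" by blast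
qed (use assms in blast)

lemma Phi_4_2_le:
  fixes u v k :: nat
  assumes "0 < v" "6 dvd v" "u * v = 12 * k" "1 \<le> k"
  shows "int (Phi u v 4 2) \<le> int u * (24 * int k ^ 2 - 6 * int k - 2) div 4"
proof -
  have "1 * int k \<le> int k * int k" using assms(4) by (intro mult_right_mono) simp_all
  then have "0 \<le> 24 * int k ^ 2 - 6 * int k - 2"
    using assms(4) unfolding power2_eq_square by linarith
  then have "0 \<le> int u * (24 * int k ^ 2 - 6 * int k - 2)" by simp
  then have "0 \<le> int u * (24 * int k ^ 2 - 6 * int k - 2) div 4" by simp
  moreover have "Phi u v 4 2 \<le> nat (int u * (24 * int k ^ 2 - 6 * int k - 2) div 4)"
  proof (rule Phi_le)
    fix C assume "is_OOC2D u v 4 2 C"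
    then have "4 * int (card C) \<le> int u * (24 * int k ^ 2 - 6 * int k - 2)"
      using assms(1-3) by (rule card_code_le)
    then show "card C \<le> nat (int u * (24 * int k ^ 2 - 6 * int k - 2) div 4)" by linarith
  qed
  ultimately show ?thesis by linarith
qed

theorem lemma5p3:
  fixes u v :: nat
  assumes "u > 0" and "v > 0" and "(u * v) mod 12 = 0" and "v mod 6 = 0"
  shows "int (Phi u v 4 2) \<le>
    \<lfloor>(real u / 4) * (real_of_int \<lfloor>(real (u * v) - 1) / 3 * real_of_int \<lfloor>(real (u * v) - 2) / 2\<rfloor>\<rfloor> - 2)\<rfloor>"
proof -
  obtain k where k: "u * v = 12 * k" using assms(3) by (auto simp: mod_eq_0_iff_dvd)
  have "0 < u * v" using assms(1,2) by simp
  then have "1 \<le> k" using k by simp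
  have uv: "real (u * v) = 12 * real k" using k by simp
  have "\<lfloor>(real (u * v) - 2) / 2\<rfloor> = 6 * int k - 1"
    unfolding uv by (intro floor_unique) simp_all
  moreover have "\<lfloor>(12 * real k - 1) / 3 * real_of_int (6 * int k - 1)\<rfloor> = 24 * int k ^ 2 - 6 * int k"
    by (intro floor_unique) (simp_all add: field_simps power2_eq_square)
  moreover have "\<lfloor>real u / 4 * (real_of_int (24 * int k ^ 2 - 6 * int k) - 2)\<rfloor>
      = int u * (24 * int k ^ 2 - 6 * int k - 2) div 4"
    by (subst floor_divide_of_int_eq[symmetric]) simp
  moreover have "6 dvd v" using assms(4) by presburger
  ultimately show ?thesis
    using Phi_4_2_le[OF assms(2) _ k \<open>1 \<le> k\<close>] unfolding uv by simp
qed

end
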